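(* Let $n\ge1$. If $\{H_1,H_2,H_3\}$ is a Hamilton decomposition of $G_{n,3}$ and $\{E_1,\dots,E_n\}$ is a Hamilton decomposition of $Q_{2n}$ (each $E_i$ a directed Hamilton cycle starting at $\mathbf 0$), then $\{g(E_i,H_j):1\le i\le n,\ 1\le j\le3\}$ is a Hamilton decomposition of $Q_{6n}$.
   Context: A Hamilton decomposition is a partition of the edge set into edge-disjoint Hamilton cycles. $Q_{2n}$ is realized on quaternary strings $q_1\cdots q_n$, adjacent iff they differ in exactly one position by $\pm1\pmod4$; $\mathbf 0=0\cdots0$. $G_{n,3}$ has vertex set $(\mathbb Z/4^n\mathbb Z)^3$, adjacency: differ in exactly one coordinate by $\pm1\pmod{4^n}$. For a directed Hamilton cycle $E$ of $Q_{2n}$ listing $e_0=\mathbf 0,\dots,e_{4^n-1}$, $\pi_E(e_p)=p$. Identify $V(Q_{6n})$ with triples $(u,w,t)$ of quaternary strings of length $n$ and set $\Psi_E(u,w,t)=(\pi_E(u),\pi_E(w),\pi_E(t))$; for a Hamilton cycle $H$ of $G_{n,3}$, $g(E,H):=\Psi_E^{-1}(H)$. *)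

theory Defs
  imports Main
begin

text \<open>The list order also fixes a direction and a starting vertex.\<close>

definition ham_cycle :: "'a set \<Rightarrow> ('a \<Rightarrow> 'a \<Rightarrow> bool) \<Rightarrow> 'a list \<Rightarrow> bool" where
  "ham_cycle V adj c \<longleftrightarrow> 3 \<le> length c \<and> distinct c \<and> set c = V \<and>
     (\<forall>k < length c. adj (c ! k) (c ! ((k + 1) mod length c)))"

definition cycle_edges :: "'a list \<Rightarrow> 'a set set" where
  "cycle_edges c = {{c ! k, c ! ((k + 1) mod length c)} | k. k < length c}"

definition graph_edges :: "'a set \<Rightarrow> ('a \<Rightarrow> 'a \<Rightarrow> bool) \<Rightarrow> 'a set set" where
  "graph_edges V adj = {{u, v} | u v. u \<in> V \<and> v \<in> V \<and> adj u v}"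

definition ham_decomp :: "'a set \<Rightarrow> ('a \<Rightarrow> 'a \<Rightarrow> bool) \<Rightarrow> 'i set \<Rightarrow> ('i \<Rightarrow> 'a list) \<Rightarrow> bool" where
  "ham_decomp V adj I C \<longleftrightarrow>
     (\<forall>i\<in>I. ham_cycle V adj (C i)) \<and>
     (\<forall>i\<in>I. \<forall>j\<in>I. i \<noteq> j \<longrightarrow> cycle_edges (C i) \<inter> cycle_edges (C j) = {}) \<and>
     (\<Union>i\<in>I. cycle_edges (C i)) = graph_edges V adj"

definition qstrings :: "nat \<Rightarrow> nat list set" where
  "qstrings n = {xs. length xs = n \<and> (\<forall>x\<in>set xs. x < 4)}"

definition zadj :: "nat \<Rightarrow> nat \<Rightarrow> nat \<Rightarrow> bool" where
  "zadj m x y \<longleftrightarrow> (x + 1) mod m = y \<or> (y + 1) mod m = x"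

definition q_adj :: "nat list \<Rightarrow> nat list \<Rightarrow> bool" where
  "q_adj xs ys \<longleftrightarrow> length xs = length ys \<and>
     (\<exists>i < length xs. (\<forall>j < length xs. j \<noteq> i \<longrightarrow> xs ! j = ys ! j) \<and> zadj 4 (xs ! i) (ys ! i))"

text \<open>Q_(2n): vertex set qstrings n, adjacency q_adj.  The all-zero string:\<close>

definition qzero :: "nat \<Rightarrow> nat list" where
  "qzero n = replicate n 0"

definition G_verts :: "nat \<Rightarrow> (nat \<times> nat \<times> nat) set" where
  "G_verts n = {(a, b, c). a < 4 ^ n \<and> b < 4 ^ n \<and> c < 4 ^ n}"

definition G_adj :: "nat \<Rightarrow> nat \<times> nat \<times> nat \<Rightarrow> nat \<times> nat \<times> nat \<Rightarrow> bool" where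
  "G_adj n v w = (case v of (a, b, c) \<Rightarrow> case w of (a', b', c') \<Rightarrow>
      (zadj (4 ^ n) a a' \<and> b = b' \<and> c = c') \<or>
      (a = a' \<and> zadj (4 ^ n) b b' \<and> c = c') \<or>
      (a = a' \<and> b = b' \<and> zadj (4 ^ n) c c'))"

text \<open>For a directed Hamilton cycle E = [e_0, ..., e_(4^n-1)] of Q_(2n) we have
  pi_E(e_p) = p, hence Psi_E^(-1)(p1,p2,p3) = e_p1 e_p2 e_p3 (concatenation, i.e. the
  triple (u,w,t) of strings identified with the string u w t of length 3n).\<close>

definition Psi_inv :: "nat list list \<Rightarrow> nat \<times> nat \<times> nat \<Rightarrow> nat list" where
  "Psi_inv E v = (case v of (a, b, c) \<Rightarrow> E ! a @ E ! b @ E ! c)"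

definition g :: "nat list list \<Rightarrow> (nat \<times> nat \<times> nat) list \<Rightarrow> nat list list" where
  "g E H = map (Psi_inv E) H"

end

theory Submission
  imports Defs
begin

(* For a Hamilton cycle E = [e_0, ..., e_(4^n-1)] of Q_(2n), the map p \<mapsto> e_p is a bijection
  from Z/4^n onto the vertices of Q_(2n) taking the edges of the cycle C_(4^n) exactly onto the
  edges of E.  Its threefold power Psi_E^(-1) therefore maps G_(n,3) = C_(4^n)^3 isomorphically onto
  the spanning subgraph of Q_(6n) = Q_(2n)^3 consisting of the edges that move one block of
  length n along an edge of E.  As E runs through a Hamilton decomposition of Q_(2n), these
  subgraphs partition the edge set of Q_(6n), so transporting the decomposition {H_1, H_2, H_3}
  of G_(n,3) along each Psi_E^(-1) yields a Hamilton decomposition of Q_(6n). *)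

lemma add_one_mod_length_less: "k < length xs \<Longrightarrow> (k + 1) mod length xs < length xs"
  by (intro mod_less_divisor) auto

lemma ham_cycle_length: "ham_cycle V adj c \<Longrightarrow> length c = card V"
  unfolding ham_cycle_def by (metis distinct_card)

lemma cycle_edges_eq_image:
  "cycle_edges c = (\<lambda>k. {c ! k, c ! ((k + 1) mod length c)}) ` {..<length c}"
  unfolding cycle_edges_def by auto

lemma cycle_edges_subset_graph_edges:
  assumes "ham_cycle V adj c"
  shows "cycle_edges c \<subseteq> graph_edges V adj"
proof
  fix e assume "e \<in> cycle_edges c"
  then obtain k where k: "k < length c" and e: "e = {c ! k, c ! ((k + 1) mod length c)}"
    unfolding cycle_edges_def by blast
  with assms have "c ! k \<in> V" "c ! ((k + 1) mod length c) \<in> V"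
    "adj (c ! k) (c ! ((k + 1) mod length c))"
    unfolding ham_cycle_def by (auto dest: nth_mem add_one_mod_length_less)
  then show "e \<in> graph_edges V adj"
    unfolding e graph_edges_def by blast
qed

lemma cycle_edges_map: "cycle_edges (map f c) = image f ` cycle_edges c"
  unfolding cycle_edges_eq_image image_image
  by (auto intro!: image_cong dest: add_one_mod_length_less)

lemma singleton_notin_cycle_edges:
  assumes "ham_cycle V adj c"
  shows "{u} \<notin> cycle_edges c"
proof
  assume "{u} \<in> cycle_edges c"
  then obtain k where k: "k < length c" and "c ! k = c ! ((k + 1) mod length c)"
    unfolding cycle_edges_def by (auto simp: doubleton_eq_iff)
  moreover from k have "(k + 1) mod length c < length c"
    by (rule add_one_mod_length_less)
  moreover have "k \<noteq> (k + 1) mod length c"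
  proof (cases "k + 1 < length c")
    case False
    with k have "k + 1 = length c" by simp
    then have "(k + 1) mod length c = 0" by simp
    moreover have "k \<noteq> 0" using False assms unfolding ham_cycle_def by linarith
    ultimately show ?thesis by simp
  qed simp
  ultimately show False
    using assms unfolding ham_cycle_def by (simp add: nth_eq_iff_index_eq)
qed

lemma doubleton_nth_in_cycle_edges_iff:
  assumes "distinct c" "p < length c" "q < length c"
  shows "{c ! p, c ! q} \<in> cycle_edges c \<longleftrightarrow> zadj (length c) p q"
proof
  assume "{c ! p, c ! q} \<in> cycle_edges c"
  then obtain k where k: "k < length c" and "{c ! p, c ! q} = {c ! k, c ! ((k + 1) mod length c)}"
    unfolding cycle_edges_def by blast
  moreover from k have "(k + 1) mod length c < length c" by (rule add_one_mod_length_less)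
  ultimately have "{p, q} = {k, (k + 1) mod length c}"
    using assms by (auto simp: doubleton_eq_iff nth_eq_iff_index_eq)
  with k show "zadj (length c) p q"
    unfolding zadj_def by (auto simp: doubleton_eq_iff)
next
  assume "zadj (length c) p q"
  with assms show "{c ! p, c ! q} \<in> cycle_edges c"
    unfolding zadj_def cycle_edges_def by (auto simp: insert_commute)
qed

lemma ham_cycle_map:
  assumes c: "ham_cycle V adj c"
    and f: "bij_betw f V W"
    and hom: "\<And>u v. u \<in> V \<Longrightarrow> v \<in> V \<Longrightarrow> adj u v \<Longrightarrow> adj' (f u) (f v)"
  shows "ham_cycle W adj' (map f c)"
  unfolding ham_cycle_def
proof (intro conjI allI impI)
  show "3 \<le> length (map f c)" "set (map f c) = W"
    using c f by (auto simp: ham_cycle_def bij_betw_def)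
  show "distinct (map f c)"
    using c f by (auto simp: ham_cycle_def bij_betw_def distinct_map)
  fix k assume k: "k < length (map f c)"
  then have "(k + 1) mod length c < length c"
    using add_one_mod_length_less[of k c] by simp
  with k c show "adj' (map f c ! k) (map f c ! ((k + 1) mod length (map f c)))"
    unfolding ham_cycle_def by (auto intro!: hom)
qed

lemma ham_decomp_lift:
  assumes decomp: "ham_decomp V adj J C"
    and bij: "\<And>i. i \<in> I \<Longrightarrow> bij_betw (f i) V W"
    and hom: "\<And>i u v. i \<in> I \<Longrightarrow> u \<in> V \<Longrightarrow> v \<in> V \<Longrightarrow> adj u v \<Longrightarrow> adj' (f i u) (f i v)"
    and disjoint: "\<And>i i'. i \<in> I \<Longrightarrow> i' \<in> I \<Longrightarrow> i \<noteq> i' \<Longrightarrow>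
      image (f i) ` graph_edges V adj \<inter> image (f i') ` graph_edges V adj = {}"
    and cover: "(\<Union>i\<in>I. image (f i) ` graph_edges V adj) = graph_edges W adj'"
  shows "ham_decomp W adj' (I \<times> J) (\<lambda>(i, j). map (f i) (C j))"
proof -
  have cycles: "\<And>j. j \<in> J \<Longrightarrow> ham_cycle V adj (C j)"
    and disjoint_cycles: "\<And>j j'. j \<in> J \<Longrightarrow> j' \<in> J \<Longrightarrow> j \<noteq> j' \<Longrightarrow>
      cycle_edges (C j) \<inter> cycle_edges (C j') = {}"
    and union: "(\<Union>j\<in>J. cycle_edges (C j)) = graph_edges V adj"
    using decomp unfolding ham_decomp_def by auto
  have lifted_cycles: "ham_cycle W adj' (map (f i) (C j))" if "i \<in> I" "j \<in> J" for i j
    using cycles[OF \<open>j \<in> J\<close>] bij[OF \<open>i \<in> I\<close>] hom[OF \<open>i \<in> I\<close>] by (rule ham_cycle_map)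
  have edges_Pow: "cycle_edges (C j) \<subseteq> Pow V" if "j \<in> J" for j
    using cycle_edges_subset_graph_edges[OF cycles[OF that]] unfolding graph_edges_def by blast
  have lifted_disjoint: "image (f i) ` cycle_edges (C j) \<inter> image (f i') ` cycle_edges (C j') = {}"
    if "i \<in> I" "j \<in> J" "i' \<in> I" "j' \<in> J" "(i, j) \<noteq> (i', j')" for i j i' j'
  proof (cases "i = i'")
    case True
    with that have "j \<noteq> j'" by simp
    have "inj_on (image (f i)) (Pow V)"
      using bij[OF \<open>i \<in> I\<close>] by (simp add: bij_betw_def inj_on_image_Pow)
    then have "image (f i) ` cycle_edges (C j) \<inter> image (f i) ` cycle_edges (C j')
        = image (f i) ` (cycle_edges (C j) \<inter> cycle_edges (C j'))"
      using edges_Pow \<open>j \<in> J\<close> \<open>j' \<in> J\<close> by (intro inj_on_image_Int[symmetric])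
    also have "\<dots> = {}"
      using disjoint_cycles[OF \<open>j \<in> J\<close> \<open>j' \<in> J\<close> \<open>j \<noteq> j'\<close>] by simp
    finally show ?thesis using True by simp
  next
    case False
    have "image (f i) ` cycle_edges (C j) \<inter> image (f i') ` cycle_edges (C j')
        \<subseteq> image (f i) ` graph_edges V adj \<inter> image (f i') ` graph_edges V adj"
      using cycle_edges_subset_graph_edges[OF cycles] \<open>j \<in> J\<close> \<open>j' \<in> J\<close>
      by (intro Int_mono image_mono)
    with disjoint[OF \<open>i \<in> I\<close> \<open>i' \<in> I\<close> False] show ?thesis by simp
  qed
  have "(\<Union>(i, j)\<in>I \<times> J. cycle_edges (map (f i) (C j)))
      = (\<Union>i\<in>I. image (f i) ` (\<Union>j\<in>J. cycle_edges (C j)))"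
    unfolding cycle_edges_map image_UN by blast
  also have "\<dots> = graph_edges W adj'"
    unfolding union by (fact cover)
  finally have "(\<Union>(i, j)\<in>I \<times> J. cycle_edges (map (f i) (C j))) = graph_edges W adj'" .
  with lifted_cycles lifted_disjoint show ?thesis
    unfolding ham_decomp_def by (simp add: split_beta cycle_edges_map)
qed

lemma bij_betw_map_lists_length:
  assumes "bij_betw f A B"
  shows "bij_betw (map f) {xs. set xs \<subseteq> A \<and> length xs = m} {ys. set ys \<subseteq> B \<and> length ys = m}"
proof (rule bij_betw_subset[OF bij_lists[OF assms]])
  show "{xs. set xs \<subseteq> A \<and> length xs = m} \<subseteq> lists A" by auto
  have "ys \<in> map f ` {xs. set xs \<subseteq> A \<and> length xs = m}"
    if "set ys \<subseteq> B" "length ys = m" for ys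
  proof -
    from that have "ys \<in> map f ` lists A"
      using bij_lists[OF assms] by (auto simp: bij_betw_def)
    with that show ?thesis by auto
  qed
  moreover have "f x \<in> B" if "x \<in> A" for x
    using that assms by (auto simp: bij_betw_def)
  ultimately show "map f ` {xs. set xs \<subseteq> A \<and> length xs = m} = {ys. set ys \<subseteq> B \<and> length ys = m}"
    by (auto simp: subset_iff)
qed

(* Adjacency in the Cartesian product of length xs copies of the graph with adjacency R:
  Q_(2n) is the n-th power of the 4-cycle, G_(n,3) the cube of the 4^n-cycle, and Q_(6n)
  the cube of Q_(2n). *)
definition list_adj :: "('a \<Rightarrow> 'a \<Rightarrow> bool) \<Rightarrow> 'a list \<Rightarrow> 'a list \<Rightarrow> bool" where
  "list_adj R xs ys \<longleftrightarrow> length xs = length ys \<and>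
     (\<exists>i < length xs. (\<forall>j < length xs. j \<noteq> i \<longrightarrow> xs ! j = ys ! j) \<and> R (xs ! i) (ys ! i))"

lemma q_adj_eq_list_adj: "q_adj = list_adj (zadj 4)"
  by (intro ext) (simp add: q_adj_def list_adj_def)

lemma list_adj_Nil1 [simp]: "\<not> list_adj R [] ys"
  and list_adj_Nil2 [simp]: "\<not> list_adj R xs []"
  by (simp_all add: list_adj_def)

lemma list_adj_Cons [simp]:
  "list_adj R (x # xs) (y # ys) \<longleftrightarrow> R x y \<and> xs = ys \<or> x = y \<and> list_adj R xs ys"
proof
  assume "list_adj R (x # xs) (y # ys)"
  then obtain i where len: "length xs = length ys" and i: "i < Suc (length xs)"
    and same: "\<And>j. j < Suc (length xs) \<Longrightarrow> j \<noteq> i \<Longrightarrow> (x # xs) ! j = (y # ys) ! j"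
    and R: "R ((x # xs) ! i) ((y # ys) ! i)"
    unfolding list_adj_def by auto
  show "R x y \<and> xs = ys \<or> x = y \<and> list_adj R xs ys"
  proof (cases i)
    case 0
    have "xs = ys"
      using len same[of "Suc _"] 0 by (intro nth_equalityI) auto
    with R 0 show ?thesis by simp
  next
    case (Suc k)
    have "x = y" using same[of 0] Suc by simp
    moreover have "list_adj R xs ys"
      unfolding list_adj_def using len i R same[of "Suc _"] Suc by (intro conjI exI[of _ k]) auto
    ultimately show ?thesis by simp
  qed
next
  assume "R x y \<and> xs = ys \<or> x = y \<and> list_adj R xs ys"
  then show "list_adj R (x # xs) (y # ys)"
  proof
    assume "R x y \<and> xs = ys"
    then show ?thesis
      unfolding list_adj_def by (intro conjI exI[of _ 0]) (auto simp: nth_Cons')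
  next
    assume "x = y \<and> list_adj R xs ys"
    then obtain i where "x = y" "length xs = length ys" "i < length xs"
      "\<forall>j < length xs. j \<noteq> i \<longrightarrow> xs ! j = ys ! j" "R (xs ! i) (ys ! i)"
      unfolding list_adj_def by auto
    then show ?thesis
      unfolding list_adj_def by (intro conjI exI[of _ "Suc i"]) (auto simp: nth_Cons')
  qed
qed

lemma list_adj_append:
  assumes "length xs = length xs'"
  shows "list_adj R (xs @ ys) (xs' @ ys') \<longleftrightarrow>
    list_adj R xs xs' \<and> ys = ys' \<or> xs = xs' \<and> list_adj R ys ys'"
  using assms by (induction xs xs' rule: list_induct2) auto

lemma list_adj_concat:
  assumes "list_all2 (\<lambda>x y. length x = length y) xss yss"
  shows "list_adj R (concat xss) (concat yss) \<longleftrightarrow> list_adj (list_adj R) xss yss"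
  using assms
proof (induction rule: list_all2_induct)
  case (Cons x xs y ys)
  then have "concat xs = concat ys \<longleftrightarrow> xs = ys"
    by (intro concat_eq_concat_iff) (auto simp: list_all2_iff)
  with Cons show ?case by (simp add: list_adj_append)
qed simp

lemma list_adj_map:
  assumes "inj_on f (set xs \<union> set ys)"
  shows "list_adj R (map f xs) (map f ys) \<longleftrightarrow> list_adj (\<lambda>x y. R (f x) (f y)) xs ys"
  using assms
proof (induction xs arbitrary: ys)
  case (Cons x xs)
  show ?case
  proof (cases ys)
    case ys: (Cons y zs)
    have inj: "inj_on f (set xs \<union> set zs)"
      using Cons.prems by (rule inj_on_subset) (auto simp: ys)
    have "f x = f y \<longleftrightarrow> x = y"
      using inj_onD[OF Cons.prems, of x y] by (auto simp: ys)
    with Cons.IH[OF inj] show ?thesis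
      by (simp add: ys inj_on_map_eq_map[OF inj])
  qed simp
qed simp

lemma list_adj_cong:
  assumes "\<And>x y. x \<in> set xs \<Longrightarrow> y \<in> set ys \<Longrightarrow> R x y \<longleftrightarrow> R' x y"
  shows "list_adj R xs ys \<longleftrightarrow> list_adj R' xs ys"
  using assms
proof (induction xs arbitrary: ys)
  case (Cons x xs)
  then show ?case by (cases ys) auto
qed simp

lemma list_adj_mono: "list_adj R xs ys \<Longrightarrow> (\<And>x y. R x y \<Longrightarrow> R' x y) \<Longrightarrow> list_adj R' xs ys"
  unfolding list_adj_def by blast

lemma list_adj_common_position:
  assumes "list_adj R xs ys" "list_adj R' xs ys" "\<And>x. \<not> R x x"
  shows "\<exists>i < length xs. R (xs ! i) (ys ! i) \<and> R' (xs ! i) (ys ! i)"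
proof -
  obtain i where i: "i < length xs" "R (xs ! i) (ys ! i)"
    using assms(1) unfolding list_adj_def by blast
  obtain i' where i': "i' < length xs" "\<forall>j < length xs. j \<noteq> i' \<longrightarrow> xs ! j = ys ! j"
    "R' (xs ! i') (ys ! i')"
    using assms(2) unfolding list_adj_def by blast
  have "i = i'"
    using i i' assms(3) by metis
  with i i' show ?thesis by blast
qed

lemma card_qstrings: "card (qstrings n) = 4 ^ n"
proof -
  have "qstrings n = {xs. set xs \<subseteq> {..<4} \<and> length xs = n}"
    by (auto simp: qstrings_def)
  then show ?thesis by (simp add: card_lists_length_eq)
qed

lemma q_adj_sym: "q_adj x y \<Longrightarrow> q_adj y x"
  unfolding q_adj_def zadj_def by metis

lemma concat_in_qstrings: "set xs \<subseteq> qstrings n \<Longrightarrow> concat xs \<in> qstrings (length xs * n)"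
  by (induction xs) (auto simp: qstrings_def)

lemma qstrings_mult_imp_concat:
  "x \<in> qstrings (m * n) \<Longrightarrow> \<exists>xs. set xs \<subseteq> qstrings n \<and> length xs = m \<and> x = concat xs"
proof (induction m arbitrary: x)
  case 0
  then show ?case by (simp add: qstrings_def)
next
  case (Suc m)
  then have "take n x \<in> qstrings n" "drop n x \<in> qstrings (m * n)"
    by (auto simp: qstrings_def dest: in_set_takeD in_set_dropD)
  with Suc.IH obtain xs where "set xs \<subseteq> qstrings n" "length xs = m" "drop n x = concat xs"
    by blast
  moreover from \<open>drop n x = concat xs\<close> have "x = concat (take n x # xs)"
    by (metis append_take_drop_id concat.simps(2))
  ultimately show ?case
    using \<open>take n x \<in> qstrings n\<close> by (intro exI[of _ "take n x # xs"]) simp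
qed

lemma bij_betw_concat_qstrings:
  "bij_betw concat {xs. set xs \<subseteq> qstrings n \<and> length xs = m} (qstrings (m * n))"
proof (rule bij_betw_imageI)
  show "inj_on concat {xs. set xs \<subseteq> qstrings n \<and> length xs = m}"
  proof (rule inj_onI)
    fix xs ys
    assume xs: "xs \<in> {xs. set xs \<subseteq> qstrings n \<and> length xs = m}"
      and ys: "ys \<in> {xs. set xs \<subseteq> qstrings n \<and> length xs = m}"
      and "concat xs = concat ys"
    have "length x = n" if "x \<in> set xs \<union> set ys" for x
      using that xs ys by (auto simp: qstrings_def)
    then have "\<forall>(x, y) \<in> set (zip xs ys). length x = length y"
      by (auto dest: set_zip_leftD set_zip_rightD)
    with \<open>concat xs = concat ys\<close> xs ys show "xs = ys"
      by (simp add: concat_eq_concat_iff)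
  qed
  show "concat ` {xs. set xs \<subseteq> qstrings n \<and> length xs = m} = qstrings (m * n)"
    using concat_in_qstrings qstrings_mult_imp_concat by fastforce
qed

lemma q_adj_concat_iff:
  assumes "set xs \<subseteq> qstrings n" "set ys \<subseteq> qstrings n" "length xs = length ys"
  shows "q_adj (concat xs) (concat ys) \<longleftrightarrow> list_adj q_adj xs ys"
proof -
  have "xs ! i \<in> qstrings n \<and> ys ! i \<in> qstrings n" if "i < length xs" for i
    using that assms nth_mem[of i xs] nth_mem[of i ys] by auto
  then have "length (xs ! i) = n \<and> length (ys ! i) = n" if "i < length xs" for i
    using that by (simp add: qstrings_def)
  then have "list_all2 (\<lambda>x y. length x = length y) xs ys"
    using assms(3) by (simp add: list_all2_conv_all_nth)
  then show ?thesis
    by (simp add: q_adj_eq_list_adj list_adj_concat)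
qed

definition list_of_triple :: "'a \<times> 'a \<times> 'a \<Rightarrow> 'a list" where
  "list_of_triple = (\<lambda>(a, b, d). [a, b, d])"

lemma Psi_inv_eq_concat: "Psi_inv c v = concat (map (nth c) (list_of_triple v))"
  by (cases v) (simp add: Psi_inv_def list_of_triple_def)

lemma G_adj_eq_list_adj:
  "G_adj n v w \<longleftrightarrow> list_adj (zadj (4 ^ n)) (list_of_triple v) (list_of_triple w)"
  by (cases v; cases w) (auto simp: G_adj_def list_of_triple_def)

lemma G_adj_sym: "G_adj n v w \<Longrightarrow> G_adj n w v"
  by (cases v; cases w) (auto simp: G_adj_def zadj_def)

lemma bij_betw_list_of_triple:
  "bij_betw list_of_triple (G_verts n) {xs. set xs \<subseteq> {..<4 ^ n} \<and> length xs = 3}"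
proof (rule bij_betw_imageI)
  show "inj_on list_of_triple (G_verts n)"
    by (rule inj_onI) (auto simp: list_of_triple_def split: prod.splits)
  have "xs \<in> list_of_triple ` G_verts n" if "set xs \<subseteq> {..<4 ^ n}" "length xs = 3" for xs
  proof -
    from \<open>length xs = 3\<close> obtain a b d where "xs = [a, b, d]"
      by (auto simp: numeral_3_eq_3 length_Suc_conv)
    with that show ?thesis
      by (auto simp: image_iff G_verts_def list_of_triple_def intro!: bexI[of _ "(a, b, d)"])
  qed
  then show "list_of_triple ` G_verts n = {xs. set xs \<subseteq> {..<4 ^ n} \<and> length xs = 3}"
    by (auto simp: G_verts_def list_of_triple_def)
qed

context
  fixes n :: nat and c :: "nat list list"
  assumes c: "ham_cycle (qstrings n) q_adj c"
begin

lemma length_ham_cycle_qstrings: "length c = 4 ^ n"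
  using ham_cycle_length[OF c] by (simp add: card_qstrings)

lemma bij_betw_cycle_strings:
  "bij_betw (\<lambda>v. map (nth c) (list_of_triple v)) (G_verts n)
     {xs. set xs \<subseteq> qstrings n \<and> length xs = 3}"
proof -
  have "bij_betw (nth c) {..<4 ^ n} (qstrings n)"
    using c by (intro bij_betw_nth) (auto simp: ham_cycle_def length_ham_cycle_qstrings)
  from bij_betw_trans[OF bij_betw_list_of_triple bij_betw_map_lists_length[OF this]]
  show ?thesis by (simp add: comp_def)
qed

lemma bij_betw_Psi_inv: "bij_betw (Psi_inv c) (G_verts n) (qstrings (3 * n))"
proof -
  have "Psi_inv c = concat \<circ> (\<lambda>v. map (nth c) (list_of_triple v))"
    by (simp add: fun_eq_iff Psi_inv_eq_concat)
  then show ?thesis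
    using bij_betw_trans[OF bij_betw_cycle_strings bij_betw_concat_qstrings] by simp
qed

lemma G_adj_iff_list_adj_cycle_edges:
  assumes "v \<in> G_verts n" "w \<in> G_verts n"
  shows "G_adj n v w \<longleftrightarrow> list_adj (\<lambda>x y. {x, y} \<in> cycle_edges c)
    (map (nth c) (list_of_triple v)) (map (nth c) (list_of_triple w))"
proof -
  have coords: "set (list_of_triple v) \<union> set (list_of_triple w) \<subseteq> {..<length c}"
    using assms bij_betw_apply[OF bij_betw_list_of_triple]
    by (auto simp: length_ham_cycle_qstrings)
  have "distinct c" using c by (simp add: ham_cycle_def)
  have "G_adj n v w \<longleftrightarrow> list_adj (\<lambda>p q. {c ! p, c ! q} \<in> cycle_edges c)
      (list_of_triple v) (list_of_triple w)"
    unfolding G_adj_eq_list_adj length_ham_cycle_qstrings[symmetric]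
    using coords \<open>distinct c\<close>
    by (intro list_adj_cong doubleton_nth_in_cycle_edges_iff[symmetric]) auto
  also have "\<dots> \<longleftrightarrow> list_adj (\<lambda>x y. {x, y} \<in> cycle_edges c)
      (map (nth c) (list_of_triple v)) (map (nth c) (list_of_triple w))"
    using coords \<open>distinct c\<close> by (intro list_adj_map[symmetric] inj_on_nth) auto
  finally show ?thesis .
qed

lemma q_adj_if_cycle_edge:
  assumes "{x, y} \<in> cycle_edges c"
  shows "q_adj x y"
proof -
  obtain u v where "{x, y} = {u, v}" "q_adj u v"
    using assms cycle_edges_subset_graph_edges[OF c] unfolding graph_edges_def by blast
  then show ?thesis by (metis doubleton_eq_iff q_adj_sym)
qed

lemma q_adj_Psi_inv:
  assumes "v \<in> G_verts n" "w \<in> G_verts n" "G_adj n v w"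
  shows "q_adj (Psi_inv c v) (Psi_inv c w)"
proof -
  let ?X = "map (nth c) (list_of_triple v)" and ?Y = "map (nth c) (list_of_triple w)"
  have "?X \<in> {xs. set xs \<subseteq> qstrings n \<and> length xs = 3}"
    "?Y \<in> {xs. set xs \<subseteq> qstrings n \<and> length xs = 3}"
    using bij_betw_apply[OF bij_betw_cycle_strings] assms(1,2) by blast+
  moreover have "list_adj q_adj ?X ?Y"
    using assms G_adj_iff_list_adj_cycle_edges
    by (auto elim!: list_adj_mono intro: q_adj_if_cycle_edge)
  ultimately show ?thesis
    unfolding Psi_inv_eq_concat by (subst q_adj_concat_iff[of _ n]) auto
qed

lemma Psi_inv_edge_image_subset:
  "image (Psi_inv c) ` graph_edges (G_verts n) (G_adj n) \<subseteq> graph_edges (qstrings (3 * n)) q_adj"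
proof
  fix e assume "e \<in> image (Psi_inv c) ` graph_edges (G_verts n) (G_adj n)"
  then obtain v w where e: "e = {Psi_inv c v, Psi_inv c w}"
    and vw: "v \<in> G_verts n" "w \<in> G_verts n" "G_adj n v w"
    unfolding graph_edges_def by blast
  have "Psi_inv c v \<in> qstrings (3 * n)" "Psi_inv c w \<in> qstrings (3 * n)"
    using bij_betw_apply[OF bij_betw_Psi_inv] vw by blast+
  moreover have "q_adj (Psi_inv c v) (Psi_inv c w)"
    using vw by (rule q_adj_Psi_inv)
  ultimately show "e \<in> graph_edges (qstrings (3 * n)) q_adj"
    unfolding e graph_edges_def by blast
qed

lemma concat_edge_in_Psi_inv_edge_image:
  assumes "set X \<subseteq> qstrings n" "length X = 3" "set Y \<subseteq> qstrings n" "length Y = 3"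
    and "list_adj (\<lambda>x y. {x, y} \<in> cycle_edges c) X Y"
  shows "{concat X, concat Y} \<in> image (Psi_inv c) ` graph_edges (G_verts n) (G_adj n)"
proof -
  have "X \<in> (\<lambda>v. map (nth c) (list_of_triple v)) ` G_verts n"
    "Y \<in> (\<lambda>v. map (nth c) (list_of_triple v)) ` G_verts n"
    using bij_betw_cycle_strings assms(1-4) by (auto simp: bij_betw_def)
  then obtain v w where v: "v \<in> G_verts n" "X = map (nth c) (list_of_triple v)"
    and w: "w \<in> G_verts n" "Y = map (nth c) (list_of_triple w)"
    by blast
  with assms(5) have "G_adj n v w"
    by (simp add: G_adj_iff_list_adj_cycle_edges)
  moreover have "{concat X, concat Y} = image (Psi_inv c) {v, w}"
    using v w by (simp add: Psi_inv_eq_concat)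
  ultimately show ?thesis
    using v w unfolding graph_edges_def by blast
qed

end

lemma Psi_inv_edge_images_disjoint:
  assumes c: "ham_cycle (qstrings n) q_adj c" and c': "ham_cycle (qstrings n) q_adj c'"
    and disjoint: "cycle_edges c \<inter> cycle_edges c' = {}"
  shows "image (Psi_inv c) ` graph_edges (G_verts n) (G_adj n)
    \<inter> image (Psi_inv c') ` graph_edges (G_verts n) (G_adj n) = {}"
proof (rule ccontr)
  assume "image (Psi_inv c) ` graph_edges (G_verts n) (G_adj n)
    \<inter> image (Psi_inv c') ` graph_edges (G_verts n) (G_adj n) \<noteq> {}"
  then obtain v w v' w' where vw: "v \<in> G_verts n" "w \<in> G_verts n" "G_adj n v w"
    and vw': "v' \<in> G_verts n" "w' \<in> G_verts n" "G_adj n v' w'"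
    and "{Psi_inv c v, Psi_inv c w} = {Psi_inv c' v', Psi_inv c' w'}"
    unfolding graph_edges_def by auto
  with G_adj_sym obtain v'' w'' where vw'': "v'' \<in> G_verts n" "w'' \<in> G_verts n" "G_adj n v'' w''"
    and same: "Psi_inv c v = Psi_inv c' v''" "Psi_inv c w = Psi_inv c' w''"
    by (metis doubleton_eq_iff)
  let ?R = "\<lambda>d x y. {x, y} \<in> cycle_edges d"
  let ?X = "map (nth c) (list_of_triple v)" and ?Y = "map (nth c) (list_of_triple w)"
  have "inj_on concat {xs. set xs \<subseteq> qstrings n \<and> length xs = 3}"
    using bij_betw_concat_qstrings by (rule bij_betw_imp_inj_on)
  then have "?X = map (nth c') (list_of_triple v'')" "?Y = map (nth c') (list_of_triple w'')"
    using same vw vw'' bij_betw_apply[OF bij_betw_cycle_strings[OF c]]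
      bij_betw_apply[OF bij_betw_cycle_strings[OF c']]
    unfolding Psi_inv_eq_concat by (blast dest: inj_onD)+
  then have "list_adj (?R c) ?X ?Y" "list_adj (?R c') ?X ?Y"
    using G_adj_iff_list_adj_cycle_edges[OF c] G_adj_iff_list_adj_cycle_edges[OF c'] vw vw''
    by simp_all
  moreover have "\<not> ?R c x x" for x
    using singleton_notin_cycle_edges[OF c] by simp
  \<comment> \<open>the block in which the two endpoints differ is an edge of both c and c'\<close>
  ultimately obtain k where "?R c (?X ! k) (?Y ! k)" "?R c' (?X ! k) (?Y ! k)"
    using list_adj_common_position by blast
  with disjoint show False by blast
qed

lemma Psi_inv_edge_images_cover:
  assumes E: "ham_decomp (qstrings n) q_adj I E"
  shows "(\<Union>i\<in>I. image (Psi_inv (E i)) ` graph_edges (G_verts n) (G_adj n))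
    = graph_edges (qstrings (3 * n)) q_adj"
proof
  have cycles: "\<And>i. i \<in> I \<Longrightarrow> ham_cycle (qstrings n) q_adj (E i)"
    and union: "(\<Union>i\<in>I. cycle_edges (E i)) = graph_edges (qstrings n) q_adj"
    using E unfolding ham_decomp_def by auto
  show "(\<Union>i\<in>I. image (Psi_inv (E i)) ` graph_edges (G_verts n) (G_adj n))
    \<subseteq> graph_edges (qstrings (3 * n)) q_adj"
    using Psi_inv_edge_image_subset[OF cycles] by blast
  show "graph_edges (qstrings (3 * n)) q_adj
    \<subseteq> (\<Union>i\<in>I. image (Psi_inv (E i)) ` graph_edges (G_verts n) (G_adj n))"
  proof
    fix e assume "e \<in> graph_edges (qstrings (3 * n)) q_adj"
    then obtain x y where e: "e = {x, y}" and xy: "x \<in> qstrings (3 * n)" "y \<in> qstrings (3 * n)"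
      and "q_adj x y"
      unfolding graph_edges_def by blast
    obtain X Y where X: "set X \<subseteq> qstrings n" "length X = 3" "x = concat X"
      and Y: "set Y \<subseteq> qstrings n" "length Y = 3" "y = concat Y"
      using qstrings_mult_imp_concat xy by metis
    with \<open>q_adj x y\<close> have "list_adj q_adj X Y"
      by (simp add: q_adj_concat_iff[of _ n])
    then obtain k where k: "k < 3" "q_adj (X ! k) (Y ! k)"
      and others: "\<forall>j < 3. j \<noteq> k \<longrightarrow> X ! j = Y ! j"
      unfolding list_adj_def using X by auto
    have "X ! k \<in> qstrings n" "Y ! k \<in> qstrings n"
      using k(1) X(1,2) Y(1,2) by (metis nth_mem subsetD)+
    with k(2) have "{X ! k, Y ! k} \<in> graph_edges (qstrings n) q_adj"
      unfolding graph_edges_def by blast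
    then obtain i where i: "i \<in> I" and "{X ! k, Y ! k} \<in> cycle_edges (E i)"
      using union by blast
    with X Y k others have "list_adj (\<lambda>x y. {x, y} \<in> cycle_edges (E i)) X Y"
      unfolding list_adj_def by auto
    with cycles[OF i] X Y have "e \<in> image (Psi_inv (E i)) ` graph_edges (G_verts n) (G_adj n)"
      unfolding e by (simp add: concat_edge_in_Psi_inv_edge_image)
    with i show "e \<in> (\<Union>i\<in>I. image (Psi_inv (E i)) ` graph_edges (G_verts n) (G_adj n))"
      by blast
  qed
qed

theorem corollary2:
  fixes n :: nat
    and H :: "nat \<Rightarrow> (nat \<times> nat \<times> nat) list"
    and E :: "nat \<Rightarrow> nat list list"
  assumes "1 \<le> n"
    and "ham_decomp (G_verts n) (G_adj n) {1..3} H"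
    and "ham_decomp (qstrings n) q_adj {1..n} E"
    and "\<forall>i\<in>{1..n}. hd (E i) = qzero n"
  shows "ham_decomp (qstrings (3 * n)) q_adj ({1..n} \<times> {1..3})
           (\<lambda>(i, j). g (E i) (H j))"
proof -
  have cycles: "\<And>i. i \<in> {1..n} \<Longrightarrow> ham_cycle (qstrings n) q_adj (E i)"
    and disjoint: "\<And>i i'. i \<in> {1..n} \<Longrightarrow> i' \<in> {1..n} \<Longrightarrow> i \<noteq> i' \<Longrightarrow>
      cycle_edges (E i) \<inter> cycle_edges (E i') = {}"
    using assms(3) unfolding ham_decomp_def by auto
  show ?thesis
    unfolding g_def
  proof (rule ham_decomp_lift[OF assms(2)])
    show "bij_betw (Psi_inv (E i)) (G_verts n) (qstrings (3 * n))" if "i \<in> {1..n}" for i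
      using cycles[OF that] by (rule bij_betw_Psi_inv)
    show "q_adj (Psi_inv (E i) v) (Psi_inv (E i) w)"
      if "i \<in> {1..n}" "v \<in> G_verts n" "w \<in> G_verts n" "G_adj n v w" for i v w
      using cycles[OF that(1)] that(2-4) by (rule q_adj_Psi_inv)
    show "image (Psi_inv (E i)) ` graph_edges (G_verts n) (G_adj n)
        \<inter> image (Psi_inv (E i')) ` graph_edges (G_verts n) (G_adj n) = {}"
      if "i \<in> {1..n}" "i' \<in> {1..n}" "i \<noteq> i'" for i i'
      using cycles[OF that(1)] cycles[OF that(2)] disjoint[OF that]
      by (rule Psi_inv_edge_images_disjoint)
    show "(\<Union>i\<in>{1..n}. image (Psi_inv (E i)) ` graph_edges (G_verts n) (G_adj n))
        = graph_edges (qstrings (3 * n)) q_adj"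
      using assms(3) by (rule Psi_inv_edge_images_cover)
  qed
qed

end
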